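(* Assume $h$ satisfies Assumption 1. If $R\le c/\delta$, then $\hat B^d=B^d$ and $\hat\epsilon(x,i)=0$ for all $i\in\{0,1\}$ and $x=0,1,\dots,B^s$.
   Context: Parameters: $\lambda>0$, $0<\mu_l<\mu_h$, $\delta=\mu_h-\mu_l$, $\Lambda=\lambda+\mu_h$, $R\ge 0$, $c>0$, discount rate $\beta>0$ with the normalization $\Lambda+\beta=1$, and $h:\{0,1,2,\dots\}\to\mathbb{R}$ nondecreasing and convex with $h(0)=0$. Assumption 1: (1) there is $\theta>1$ with $h(x+1)\le\theta h(x)$ for all $x>0$; (2) there exist $\gamma\in[0,1)$ and a positive integer $J$ with $\left(\frac{\Lambda}{\Lambda+\beta}\right)^J[R+c+h(x+J)]\le\gamma[R+c+h(x)]$ for all $x\ge0$. Combined problem finite-horizon values on $S=\{0,1,\dots\}\times\{0,1\}$: $v_0\equiv0$, $v_{n+1}(0,0)=\lambda v_n(0,1)+\mu_h v_n(0,0)$; $v_{n+1}(x,0)=-h(x)+\lambda v_n(x,1)+\mu_l v_n(x-1,0)+\max\{\delta v_n(x,0),-c+\delta v_n(x-1,0)\}$ for $x\ge1$; $v_{n+1}(x,1)=\max\{R+v_{n+1}(x+1,0),v_{n+1}(x,0)\}$. Admission-control subproblem: $\hat v$ defined identically except that the max in the $(x,0)$ equation is replaced by $\delta\hat v_n(x,0)$ (service rate always $\mu_l$). Infinite-horizon values: $v=\lim_n v_n$ and $\hat v=\lim_n\hat v_n$ (pointwise limits, which exist under Assumption 1). $\hat\epsilon(x,i)=v(x,i)-\hat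 v(x,i)$. With $\Delta(x,0)=v(x,0)-v(x+1,0)$, $\hat\Delta(x,0)=\hat v(x,0)-\hat v(x+1,0)$ and $T_f(\theta)=\sup\{k\ge0:f(k)\le\theta\}$ ($\sup\emptyset=-1$, $+\infty$ allowed), the thresholds are $B^s=1+T_{\Delta(\cdot,0)}(c/\delta)$, $B^d=T_{\Delta(\cdot,0)}(R)$ and $\hat B^d=T_{\hat\Delta(\cdot,0)}(R)$. *)

theory Defs
  imports Complex_Main "HOL-Library.Extended_Real"
begin

text \<open>States are pairs (x,i) with x a queue length and i in {0,1}; values are
represented as functions w x i (only i = 0 and i = 1 are meaningful).
The flag ctrl = True gives the combined problem (service-rate control),
ctrl = False gives the admission-control subproblem (rate always mu_l).\<close>

definition vstep :: "bool \<Rightarrow> real \<Rightarrow> real \<Rightarrow> real \<Rightarrow> real \<Rightarrow> real \<Rightarrow> (nat \<Rightarrow> real)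
    \<Rightarrow> (nat \<Rightarrow> nat \<Rightarrow> real) \<Rightarrow> nat \<Rightarrow> nat \<Rightarrow> real" where
  "vstep ctrl lam mul muh R c h w =
    (let d = muh - mul;
         w0 = (\<lambda>x. if x = 0 then lam * w 0 1 + muh * w 0 0
                   else - h x + lam * w x 1 + mul * w (x - 1) 0
                        + (if ctrl then max (d * w x 0) (- c + d * w (x - 1) 0)
                           else d * w x 0))
     in (\<lambda>x i. if i = 0 then w0 x else max (R + w0 (x + 1)) (w0 x)))"

primrec vn :: "bool \<Rightarrow> real \<Rightarrow> real \<Rightarrow> real \<Rightarrow> real \<Rightarrow> real \<Rightarrow> (nat \<Rightarrow> real)
    \<Rightarrow> nat \<Rightarrow> nat \<Rightarrow> nat \<Rightarrow> real" where
  "vn ctrl lam mul muh R c h 0 = (\<lambda>x i. 0)"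
| "vn ctrl lam mul muh R c h (Suc n) = vstep ctrl lam mul muh R c h (vn ctrl lam mul muh R c h n)"

definition vinf :: "bool \<Rightarrow> real \<Rightarrow> real \<Rightarrow> real \<Rightarrow> real \<Rightarrow> real \<Rightarrow> (nat \<Rightarrow> real)
    \<Rightarrow> nat \<Rightarrow> nat \<Rightarrow> real" where
  "vinf ctrl lam mul muh R c h x i = lim (\<lambda>n. vn ctrl lam mul muh R c h n x i)"

definition Tsup :: "(nat \<Rightarrow> real) \<Rightarrow> real \<Rightarrow> ereal" where
  "Tsup f \<theta> = (if {k. f k \<le> \<theta>} = {} then -1
                 else Sup ((\<lambda>k. ereal (real k)) ` {k. f k \<le> \<theta>}))"

end

theory Submission
  imports Defs
begin

(* Proof idea.  Both problems are solved by value iteration with the Bellman operator B b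
   (b = True: combined problem, b = False: admission control only).

   B b is a local contraction with modulus Lambda = lam + muh < 1: at state
      (x,0) it moves by at most Lambda times the change of its inputs at states <= x.  With
      Assumption 1(2) the increments of value iteration are summable, so the finite-horizon
      values converge and their limits are fixed points of B b.
   3. Invariants of B b, inherited by the limits: the combined values dominate the admission
      values, all values lie between -h x / beta and lam R / beta, and the differences
      v(x,0) - v(x+1,0) are nonnegative and nondecreasing (this uses convexity of h).
   4. Gap analysis.  Let gap = v - vh.  On a "slow segment" -- a down-closed set of queue
      lengths on which the combined problem keeps the slow rate and which is closed under its
      admissions -- the gap satisfies gap <= Lambda^k * (R + c + h(x+k)) / beta for every k,
      hence vanishes.
   5. For R <= c/delta the states x <= B^s form a slow segment; there the two problems have
      the same differences, so they take the same admission decisions (B^d = hat B^d), and the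
      gap, i.e. hat epsilon, is zero. *)

lemma abs_max_diff_le: "\<bar>max p q - max p' q'\<bar> \<le> max \<bar>p - p'\<bar> \<bar>q - q'\<bar>" for p q p' q' :: real
  by (auto simp: max_def abs_if)

lemma switch_diff_first: "d * p - max (d * r) (- c + d * p) = min (d * (p - r)) c" for d c p r :: real
  by (auto simp: max_def min_def algebra_simps)

lemma switch_diff: "max (d * q) (- c + d * p) - max (d * r) (- c + d * q)
    = min (d * (q - r)) c + max 0 (d * (p - q) - c)" for d c p q r :: real
  by (auto simp: max_def min_def algebra_simps)

lemma admission_keeps_concave:
  fixes a0 a1 a2 a3 R :: real
  assumes "0 \<le> a0 - a1" "a0 - a1 \<le> a1 - a2" "a1 - a2 \<le> a2 - a3" "0 \<le> R"
  shows "0 \<le> max (R + a1) a0 - max (R + a2) a1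
    \<and> max (R + a1) a0 - max (R + a2) a1 \<le> max (R + a2) a1 - max (R + a3) a2"
  using assms by (auto simp: max_def)

lemma Tsup_upper: "f k \<le> \<theta> \<Longrightarrow> ereal (real k) \<le> Tsup f \<theta>"
  unfolding Tsup_def by (auto intro!: Sup_upper)

lemma Tsup_ge_minus_one: "-1 \<le> Tsup f \<theta>"
proof (cases "{j. f j \<le> \<theta>} = {}")
  case True
  then show ?thesis by (simp add: Tsup_def)
next
  case False
  then obtain k where "f k \<le> \<theta>" by auto
  then have "ereal (real k) \<le> Tsup f \<theta>" by (rule Tsup_upper)
  moreover have "-1 \<le> ereal (real k)" by (simp add: one_ereal_def)
  ultimately show ?thesis by (rule order_trans[rotated])
qed

lemma Tsup_below:
  assumes mono: "\<And>j. f j \<le> f (Suc j)" and k: "ereal (real k) \<le> Tsup f \<theta>"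
  shows "f k \<le> \<theta>"
proof (rule ccontr)
  assume "\<not> f k \<le> \<theta>"
  then have below_k: "real j \<le> real k - 1" if "f j \<le> \<theta>" for j
  proof -
    have "j < k" using that lift_Suc_mono_le[of f, OF mono, of k j] \<open>\<not> f k \<le> \<theta>\<close>
      by (meson leI order_trans)
    then show ?thesis by linarith
  qed
  show False
  proof (cases "{j. f j \<le> \<theta>} = {}")
    case True
    then show False using k by (simp add: Tsup_def one_ereal_def)
  next
    case False
    have "Tsup f \<theta> = Sup ((\<lambda>k. ereal (real k)) ` {j. f j \<le> \<theta>})"
      by (simp only: Tsup_def if_not_P[OF False])
    also have "\<dots> \<le> ereal (real k - 1)"
      using below_k by (auto intro!: Sup_least)
    finally have "ereal (real k) \<le> ereal (real k - 1)" using k by (rule order_trans[rotated])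
    then show False by simp
  qed
qed

lemma Tsup_cong: "(\<And>k. f k \<le> \<theta> \<longleftrightarrow> g k \<le> \<theta>') \<Longrightarrow> Tsup f \<theta> = Tsup g \<theta>'"
  by (simp add: Tsup_def)

lemma zero_le_one_plus: "-1 \<le> (T::ereal) \<Longrightarrow> ereal (real 0) \<le> 1 + T"
  by (cases T) (auto simp: one_ereal_def)

lemma pred_le_of_le_one_plus:
  "-1 \<le> (T::ereal) \<Longrightarrow> ereal (real x) \<le> 1 + T \<Longrightarrow> x \<ge> 1 \<Longrightarrow> ereal (real (x - 1)) \<le> T"
  by (cases T) (auto simp: one_ereal_def)

lemma succ_le_one_plus: "ereal (real x) \<le> (T::ereal) \<Longrightarrow> ereal (real (x + 1)) \<le> 1 + T"
  by (cases T) (auto simp: one_ereal_def)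

lemma ereal_of_nat_le_mono: "ereal (real x) \<le> B \<Longrightarrow> y \<le> x \<Longrightarrow> ereal (real y) \<le> B"
  by (meson ereal_less_eq(3) of_nat_le_iff order_trans)

text \<open>The model under the standing hypotheses of the theorem.\<close>

locale queue_model =
  fixes lam mul muh R c \<beta> :: real and h :: "nat \<Rightarrow> real"
  assumes lam_pos: "lam > 0" and mul_pos: "0 < mul" and mul_muh: "mul < muh"
    and R_nonneg: "R \<ge> 0" and c_pos: "c > 0" and beta_pos: "\<beta> > 0"
    and normalization: "lam + muh + \<beta> = 1"
    and h_mono: "\<And>x y. x \<le> y \<Longrightarrow> h x \<le> h y"
    and h_convex: "\<And>x. h (x + 1) - h x \<le> h (x + 2) - h (x + 1)"
    and h_zero: "h 0 = 0"
    and A1_2: "\<exists>\<gamma> J. 0 \<le> \<gamma> \<and> \<gamma> < 1 \<and> J > 0 \<and>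
                 (\<forall>x. ((lam + muh) / (lam + muh + \<beta>)) ^ J * (R + c + h (x + J))
                        \<le> \<gamma> * (R + c + h x))"
begin

abbreviation B :: "bool \<Rightarrow> (nat \<Rightarrow> nat \<Rightarrow> real) \<Rightarrow> nat \<Rightarrow> nat \<Rightarrow> real" where
  "B b \<equiv> vstep b lam mul muh R c h"

abbreviation V :: "bool \<Rightarrow> nat \<Rightarrow> nat \<Rightarrow> nat \<Rightarrow> real" where
  "V b n \<equiv> vn b lam mul muh R c h n"

abbreviation vi :: "bool \<Rightarrow> nat \<Rightarrow> nat \<Rightarrow> real" where
  "vi b \<equiv> vinf b lam mul muh R c h"

definition \<Lambda> :: real where "\<Lambda> = lam + muh"
definition \<delta> :: real where "\<delta> = muh - mul"

text \<open>The weight R + c + h x of Assumption 1(2); it dominates all one-step rewards and costs.\<close>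

definition weight :: "nat \<Rightarrow> real" where "weight x = R + c + h x"

lemma h_nonneg: "0 \<le> h x"
  using h_mono[of 0 x] h_zero by simp

lemma \<Lambda>_eq: "\<Lambda> = 1 - \<beta>"
  using normalization by (simp add: \<Lambda>_def)

lemma \<Lambda>_pos: "0 < \<Lambda>"
  using lam_pos mul_pos mul_muh by (simp add: \<Lambda>_def)

lemma \<Lambda>_lt_one: "\<Lambda> < 1"
  using \<Lambda>_eq beta_pos by simp

lemma \<delta>_pos: "0 < \<delta>"
  using mul_muh by (simp add: \<delta>_def)

lemma rates_sum: "lam + mul + \<delta> = \<Lambda>"
  by (simp add: \<Lambda>_def \<delta>_def)

lemma weight_mono: "x \<le> y \<Longrightarrow> weight x \<le> weight y"
  using h_mono by (simp add: weight_def)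

lemma weight_pos: "0 < weight x"
  using h_nonneg[of x] R_nonneg c_pos by (simp add: weight_def)

lemma B0: "B b w x 0 = (if x = 0 then lam * w 0 1 + muh * w 0 0
    else - h x + lam * w x 1 + mul * w (x - 1) 0
      + (if b then max (\<delta> * w x 0) (- c + \<delta> * w (x - 1) 0) else \<delta> * w x 0))"
  by (simp add: vstep_def Let_def \<delta>_def)

lemma B1: "B b w x 1 = max (R + B b w (x + 1) 0) (B b w x 0)"
  by (simp add: vstep_def Let_def)

lemma V_Suc: "V b (Suc n) = B b (V b n)"
  by simp

declare vn.simps(2)[simp del]

lemma B0_lipschitz:
  assumes close0: "\<And>y. y \<le> x \<Longrightarrow> \<bar>w y 0 - w' y 0\<bar> \<le> K"
    and close1: "\<bar>w x 1 - w' x 1\<bar> \<le> K"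
  shows "\<bar>B b w x 0 - B b w' x 0\<bar> \<le> \<Lambda> * K"
proof -
  have scaled: "\<bar>a * p - a * q\<bar> \<le> a * K" if "0 \<le> a" "\<bar>p - q\<bar> \<le> K" for a p q
    using that by (metis abs_mult abs_of_nonneg mult_left_mono right_diff_distrib)
  have arrival: "\<bar>lam * w x 1 - lam * w' x 1\<bar> \<le> lam * K"
    using scaled close1 lam_pos by simp
  have stay: "\<bar>\<delta> * w x 0 - \<delta> * w' x 0\<bar> \<le> \<delta> * K"
    using scaled close0 \<delta>_pos by simp
  show ?thesis
  proof (cases "x = 0")
    case True
    have "\<bar>muh * w 0 0 - muh * w' 0 0\<bar> \<le> muh * K"
      using scaled close0 mul_pos mul_muh by simp
    with arrival True show ?thesis
      by (simp add: B0 \<Lambda>_def abs_le_iff distrib_right)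
  next
    case False
    have departure: "\<bar>mul * w (x - 1) 0 - mul * w' (x - 1) 0\<bar> \<le> mul * K"
      using scaled close0 mul_pos by simp
    have switch: "\<bar>max (\<delta> * w x 0) (- c + \<delta> * w (x - 1) 0)
        - max (\<delta> * w' x 0) (- c + \<delta> * w' (x - 1) 0)\<bar> \<le> \<delta> * K"
      using order_trans[OF abs_max_diff_le max.boundedI[OF stay]]
        scaled[OF less_imp_le[OF \<delta>_pos] close0[of "x - 1"]] by simp
    have "\<Lambda> * K = lam * K + mul * K + \<delta> * K"
      by (simp add: rates_sum[symmetric] distrib_right)
    with False arrival departure stay switch show ?thesis
      by (cases b) (simp_all add: B0 abs_le_iff)
  qed
qed

lemma value_increment_bound:
  "\<bar>V b (Suc n) x 0 - V b n x 0\<bar> \<le> \<Lambda> ^ n * weight (x + n)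
   \<and> \<bar>V b (Suc n) x 1 - V b n x 1\<bar> \<le> \<Lambda> ^ n * weight (x + n + 1)"
proof (induction n arbitrary: x)
  case 0
  have first0: "V b (Suc 0) y 0 = (if y = 0 then 0 else - h y)" for y
    using c_pos by (simp add: V_Suc B0 max_def)
  have bound0: "\<bar>V b (Suc 0) y 0\<bar> \<le> weight y" for y
    using h_nonneg[of y] R_nonneg c_pos by (simp add: first0 weight_def h_zero)
  have "\<bar>V b (Suc 0) x 1\<bar> \<le> max \<bar>R + V b (Suc 0) (x + 1) 0\<bar> \<bar>V b (Suc 0) x 0\<bar>"
    using abs_max_diff_le[of _ _ 0 0] by (simp only: V_Suc B1)
  also have "\<dots> \<le> weight (x + 1)"
    using bound0[of x] weight_mono[of x "x + 1"] R_nonneg c_pos h_nonneg[of "x + 1"]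
    by (simp add: first0 weight_def)
  finally have "\<bar>V b (Suc 0) x 1\<bar> \<le> weight (x + 1)" .
  with bound0[of x] show ?case by simp
next
  case (Suc n)
  have step0: "\<bar>V b (Suc (Suc n)) y 0 - V b (Suc n) y 0\<bar> \<le> \<Lambda> ^ Suc n * weight (y + Suc n)" for y
  proof -
    let ?K = "\<Lambda> ^ n * weight (y + n + 1)"
    have "\<bar>V b (Suc n) z 0 - V b n z 0\<bar> \<le> ?K" if "z \<le> y" for z
    proof -
      have "\<Lambda> ^ n * weight (z + n) \<le> ?K"
        using \<Lambda>_pos that by (intro mult_left_mono weight_mono) auto
      then show ?thesis using Suc.IH[of z] by linarith
    qed
    moreover have "\<bar>V b (Suc n) y 1 - V b n y 1\<bar> \<le> ?K"
      using Suc.IH[of y] by simp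
    ultimately have "\<bar>B b (V b (Suc n)) y 0 - B b (V b n) y 0\<bar> \<le> \<Lambda> * ?K"
      by (rule B0_lipschitz)
    then show ?thesis by (simp add: V_Suc[of b "Suc n"] V_Suc[of b n] mult.assoc)
  qed
  have "\<bar>V b (Suc (Suc n)) x 1 - V b (Suc n) x 1\<bar>
      \<le> max \<bar>V b (Suc (Suc n)) (x + 1) 0 - V b (Suc n) (x + 1) 0\<bar>
            \<bar>V b (Suc (Suc n)) x 0 - V b (Suc n) x 0\<bar>"
    using abs_max_diff_le[of "R + V b (Suc (Suc n)) (x + 1) 0" "V b (Suc (Suc n)) x 0"
        "R + V b (Suc n) (x + 1) 0" "V b (Suc n) x 0"]
    unfolding V_Suc[of b "Suc n"] V_Suc[of b n] B1 by simp
  also have "\<dots> \<le> \<Lambda> ^ Suc n * weight (x + Suc n + 1)"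
  proof (rule max.boundedI)
    show "\<bar>V b (Suc (Suc n)) (x + 1) 0 - V b (Suc n) (x + 1) 0\<bar> \<le> \<Lambda> ^ Suc n * weight (x + Suc n + 1)"
      using step0[of "x + 1"] by (simp add: ac_simps)
    have "\<Lambda> ^ Suc n * weight (x + Suc n) \<le> \<Lambda> ^ Suc n * weight (x + Suc n + 1)"
      using \<Lambda>_pos by (intro mult_left_mono weight_mono) auto
    then show "\<bar>V b (Suc (Suc n)) x 0 - V b (Suc n) x 0\<bar> \<le> \<Lambda> ^ Suc n * weight (x + Suc n + 1)"
      using step0[of x] by linarith
  qed
  finally show ?case using step0[of x] by simp
qed

lemma weight_decay:
  "\<exists>g J. 0 < g \<and> g < 1 \<and> J > 0 \<and> (\<forall>x. \<Lambda> ^ J * weight (x + J) \<le> g * weight x)"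
proof -
  obtain \<gamma> J where \<gamma>: "0 \<le> \<gamma>" "\<gamma> < 1" "J > 0"
    and decay: "\<And>x. \<Lambda> ^ J * weight (x + J) \<le> \<gamma> * weight x"
    using A1_2 normalization by (auto simp: \<Lambda>_def weight_def)
  show ?thesis
  proof (intro exI conjI allI)
    show "0 < max \<gamma> (1/2)" "max \<gamma> (1/2) < 1" "J > 0" using \<gamma> by auto
    show "\<Lambda> ^ J * weight (x + J) \<le> max \<gamma> (1/2) * weight x" for x
      using weight_pos[of x] by (intro order_trans[OF decay[of x]] mult_right_mono) auto
  qed
qed

text \<open>Hence the discounted weights are dominated by a geometric series.\<close>

lemma discounted_weight_summable: "summable (\<lambda>k. \<Lambda> ^ k * weight (z + k))"
proof -
  obtain g J where g: "0 < g" "g < 1" and J: "J > 0"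
    and decay: "\<And>x. \<Lambda> ^ J * weight (x + J) \<le> g * weight x"
    using weight_decay by meson
  have iterated: "\<Lambda> ^ (m * J) * weight (y + m * J) \<le> g ^ m * weight y" for m y
  proof (induction m arbitrary: y)
    case (Suc m)
    have "\<Lambda> ^ (Suc m * J) * weight (y + Suc m * J) = \<Lambda> ^ J * (\<Lambda> ^ (m * J) * weight ((y + J) + m * J))"
      by (simp add: power_add algebra_simps)
    also have "\<dots> \<le> \<Lambda> ^ J * (g ^ m * weight (y + J))"
      using Suc.IH[of "y + J"] \<Lambda>_pos by (intro mult_left_mono) auto
    also have "\<dots> = g ^ m * (\<Lambda> ^ J * weight (y + J))" by simp
    also have "\<dots> \<le> g ^ m * (g * weight y)"
      using decay[of y] g by (intro mult_left_mono) auto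
    finally show ?case by (simp add: mult_ac)
  qed simp
  define \<rho> where "\<rho> = root J g"
  have \<rho>: "0 < \<rho>" "\<rho> < 1" "\<rho> ^ J = g" using g J by (auto simp: \<rho>_def)
  have geometric: "\<Lambda> ^ k * weight (z + k) \<le> (weight (z + J) / g) * \<rho> ^ k" for k
  proof -
    define m r where "m = k div J" and "r = k mod J"
    have k: "k = m * J + r" by (simp add: m_def r_def)
    have r: "r < J" using J by (simp add: r_def)
    have "\<Lambda> ^ k * weight (z + k) = \<Lambda> ^ r * (\<Lambda> ^ (m * J) * weight ((z + r) + m * J))"
      by (simp add: k power_add algebra_simps)
    also have "\<dots> \<le> \<Lambda> ^ r * (g ^ m * weight (z + r))"
      using iterated[of m "z + r"] \<Lambda>_pos by (intro mult_left_mono) auto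
    also have "\<dots> \<le> 1 * (g ^ m * weight (z + J))"
      using \<Lambda>_pos \<Lambda>_lt_one g weight_pos[of "z + r"] r weight_mono[of "z + r" "z + J"]
      by (intro mult_mono power_le_one mult_left_mono) auto
    also have "g ^ m = \<rho> ^ (J * m)" by (simp add: power_mult \<rho>)
    also have "\<rho> ^ (J * m) \<le> \<rho> ^ k / g"
    proof -
      have "\<rho> ^ (J * m + J) \<le> \<rho> ^ k" using \<rho> k r by (intro power_decreasing) auto
      then show ?thesis using g by (simp add: power_add \<rho> field_simps)
    qed
    then have "1 * (\<rho> ^ (J * m) * weight (z + J)) \<le> 1 * (\<rho> ^ k / g * weight (z + J))"
      using weight_pos[of "z + J"] by (intro mult_left_mono mult_right_mono) auto
    finally show ?thesis by (simp add: mult_ac)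
  qed
  show ?thesis
  proof (rule summable_comparison_test')
    show "summable (\<lambda>k. (weight (z + J) / g) * \<rho> ^ k)"
      using \<rho> by (intro summable_mult summable_geometric) auto
    show "norm (\<Lambda> ^ k * weight (z + k)) \<le> (weight (z + J) / g) * \<rho> ^ k" for k
      using geometric[of k] \<Lambda>_pos weight_pos[of "z + k"] by simp
  qed
qed

text \<open>Value iteration converges: V b n telescopes into a summable series.\<close>

lemma value_iteration_converges:
  assumes "i \<le> 1" shows "(\<lambda>n. V b n x i) \<longlonglongrightarrow> vi b x i"
proof -
  define f where "f k = V b (Suc k) x i - V b k x i" for k
  have "norm (f k) \<le> \<Lambda> ^ k * weight ((x + 1) + k)" for k
  proof -
    have "norm (f k) \<le> \<Lambda> ^ k * weight (x + k + i)"
      using value_increment_bound[of b k x] assms by (cases i) (auto simp: f_def)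
    also have "\<dots> \<le> \<Lambda> ^ k * weight ((x + 1) + k)"
      using \<Lambda>_pos assms by (intro mult_left_mono weight_mono) auto
    finally show ?thesis .
  qed
  then have "summable f" by (rule summable_comparison_test'[OF discounted_weight_summable])
  moreover have "V b n x i = (\<Sum>k<n. f k)" for n
    unfolding f_def by (subst sum_lessThan_telescope) simp
  ultimately have "(\<lambda>n. V b n x i) \<longlonglongrightarrow> suminf f" by (simp add: summable_LIMSEQ)
  moreover from this have "vi b x i = suminf f" unfolding vinf_def by (rule limI)
  ultimately show ?thesis by simp
qed

lemma B0_tendsto: "(\<lambda>n. B b (V b n) x 0) \<longlonglongrightarrow> B b (vi b) x 0"
  unfolding B0 using value_iteration_converges[of 0] value_iteration_converges[of 1]
  by (cases "x = 0"; cases b; simp; intro tendsto_intros) auto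

lemma bellman: assumes "i \<le> 1" shows "vi b x i = B b (vi b) x i"
proof -
  have "(\<lambda>n. B b (V b n) x i) \<longlonglongrightarrow> vi b x i"
    using LIMSEQ_Suc[OF value_iteration_converges[OF assms]] by (simp add: V_Suc)
  moreover have "(\<lambda>n. B b (V b n) x i) \<longlonglongrightarrow> B b (vi b) x i"
  proof (cases "i = 0")
    case True
    then show ?thesis using B0_tendsto by simp
  next
    case False
    then have "i = 1" using assms by simp
    then show ?thesis by (simp only: B1) (intro tendsto_max tendsto_add tendsto_const B0_tendsto)
  qed
  ultimately show ?thesis by (rule LIMSEQ_unique)
qed

text \<open>Allowing the fast service rate can only help: B False is dominated by B True, and both
  are monotone in the input values.\<close>

lemma B_dominates:
  assumes le: "\<And>x i. i \<le> 1 \<Longrightarrow> w x i \<le> w' x i" and "i \<le> 1"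
  shows "B False w x i \<le> B True w' x i"
proof -
  have scaled: "a * w y j \<le> a * w' y j" if "0 \<le> a" "j \<le> 1" for a j y
    using le that by (intro mult_left_mono) auto
  have state0: "B False w y 0 \<le> B True w' y 0" for y
  proof (cases "y = 0")
    case True
    have "lam * w 0 1 + muh * w 0 0 \<le> lam * w' 0 1 + muh * w' 0 0"
      using lam_pos mul_pos mul_muh by (intro add_mono scaled) auto
    then show ?thesis using True by (simp add: B0)
  next
    case False
    have "- h y + lam * w y 1 + mul * w (y - 1) 0 + \<delta> * w y 0
        \<le> - h y + lam * w' y 1 + mul * w' (y - 1) 0 + \<delta> * w' y 0"
      using lam_pos mul_pos \<delta>_pos by (intro add_mono scaled order_refl) auto
    then show ?thesis using False by (simp add: B0)
  qed
  show ?thesis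
  proof (cases "i = 0")
    case True
    then show ?thesis using state0 by simp
  next
    case False
    then have "i = 1" using \<open>i \<le> 1\<close> by simp
    show ?thesis
      unfolding \<open>i = 1\<close> B1 using state0[of x] state0[of "x + 1"] by (intro max.mono) auto
  qed
qed

text \<open>Upper bound: a policy earns at most lam R per period, so values stay below lam R / beta.\<close>

definition value_cap :: real where "value_cap = lam * R / \<beta>"

lemma value_cap_nonneg: "0 \<le> value_cap"
  using lam_pos R_nonneg beta_pos by (simp add: value_cap_def)

lemma value_cap_fixed: "lam * (R + value_cap) + muh * value_cap = value_cap"
proof -
  have "lam * (R + value_cap) + muh * value_cap = lam * R + (lam + muh) * value_cap"
    by (simp add: algebra_simps)
  also have "\<dots> = lam * R + value_cap - \<beta> * value_cap"
    using normalization by (simp add: algebra_simps flip: \<Lambda>_def[unfolded \<Lambda>_eq])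
  also have "\<beta> * value_cap = lam * R"
    using beta_pos by (simp add: value_cap_def)
  finally show ?thesis by simp
qed

lemma B_upper:
  assumes cap0: "\<And>x. w x 0 \<le> value_cap" and cap1: "\<And>x. w x 1 \<le> R + value_cap"
  shows "B b w x 0 \<le> value_cap \<and> B b w x 1 \<le> R + value_cap"
proof -
  have state0: "B b w y 0 \<le> value_cap" for y
  proof -
    have scaled0: "a * w z 0 \<le> a * value_cap" if "0 < a" for a z
      using cap0 that by (intro mult_left_mono) auto
    have arrival: "lam * w y 1 \<le> lam * (R + value_cap)"
      using cap1 lam_pos by (intro mult_left_mono) auto
    have switch: "max (\<delta> * w y 0) (- c + \<delta> * w (y - 1) 0) \<le> \<delta> * value_cap"
      using scaled0[OF \<delta>_pos, of y] scaled0[OF \<delta>_pos, of "y - 1"] c_pos by simp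
    have "B b w y 0 \<le> lam * (R + value_cap) + muh * value_cap"
    proof (cases "y = 0")
      case True
      have "0 < muh" using mul_pos mul_muh by simp
      then have "lam * w 0 1 + muh * w 0 0 \<le> lam * (R + value_cap) + muh * value_cap"
        using True arrival by (intro add_mono scaled0) auto
      then show ?thesis using True by (simp add: B0)
    next
      case False
      have "muh * value_cap = mul * value_cap + \<delta> * value_cap" by (simp add: \<delta>_def algebra_simps)
      then show ?thesis
        using False arrival switch scaled0[OF mul_pos, of "y - 1"] scaled0[OF \<delta>_pos, of y] h_nonneg[of y]
        by (simp add: B0 max_def)
    qed
    then show ?thesis using value_cap_fixed by simp
  qed
  show ?thesis
    unfolding B1 using state0[of x] state0[of "x + 1"] R_nonneg by (intro conjI max.boundedI) linarith+
qed

text \<open>Lower bound: holding costs are at most h x per period on the way down, so values stay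
  above -h x / beta.\<close>

lemma B_lower:
  assumes "\<And>x. - h x / \<beta> \<le> w x 0" "\<And>x. - h x / \<beta> \<le> w x 1"
  shows "- h x / \<beta> \<le> B b w x 0 \<and> - h x / \<beta> \<le> B b w x 1"
proof -
  have scaled: "a * (- h y / \<beta>) \<le> a * w z j" if "0 \<le> a" "j \<le> 1" "z \<le> y" for a j z y
  proof -
    have "- h y / \<beta> \<le> - h z / \<beta>"
      using h_mono[OF \<open>z \<le> y\<close>] beta_pos by (simp add: divide_right_mono)
    also have "\<dots> \<le> w z j" using assms \<open>j \<le> 1\<close> by (cases j) auto
    finally show ?thesis using \<open>0 \<le> a\<close> by (rule mult_left_mono)
  qed
  have state0: "- h x / \<beta> \<le> B b w x 0"
  proof (cases "x = 0")
    case True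
    have "0 \<le> lam * w 0 1 + muh * w 0 0"
      using scaled[of lam 1 0 0] scaled[of muh 0 0 0] lam_pos mul_pos mul_muh
      by (intro add_nonneg_nonneg) (simp_all add: h_zero)
    then show ?thesis using True by (simp add: B0 h_zero)
  next
    case False
    have "- h x / \<beta> = - h x + (1 - \<beta>) * (- h x / \<beta>)"
      using beta_pos by (simp add: field_simps)
    also have "1 - \<beta> = lam + mul + \<delta>"
      using rates_sum \<Lambda>_eq by simp
    also have "- h x + (lam + mul + \<delta>) * (- h x / \<beta>) \<le> B b w x 0"
      using False scaled[of lam 1 x x] scaled[of mul 0 "x - 1" x] scaled[of \<delta> 0 x x]
        lam_pos mul_pos \<delta>_pos
      by (simp add: B0 distrib_right add_divide_distrib max_def)
    finally show ?thesis .
  qed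
  then show ?thesis unfolding B1 by simp
qed

lemma finite_horizon_bounds:
  "(\<forall>x i. i \<le> 1 \<longrightarrow> V False n x i \<le> V True n x i)
   \<and> (\<forall>x. V b n x 0 \<le> value_cap \<and> V b n x 1 \<le> R + value_cap)
   \<and> (\<forall>x. - h x / \<beta> \<le> V b n x 0 \<and> - h x / \<beta> \<le> V b n x 1)"
proof (induction n)
  case 0
  then show ?case using value_cap_nonneg R_nonneg h_nonneg beta_pos by simp
next
  case (Suc n)
  then show ?case
    unfolding V_Suc by (intro conjI allI impI B_dominates B_upper[THEN conjunct1] B_upper[THEN conjunct2]
        B_lower[THEN conjunct1] B_lower[THEN conjunct2]) auto
qed

lemma combined_dominates: "i \<le> 1 \<Longrightarrow> vi False x i \<le> vi True x i"
  by (rule LIMSEQ_le[OF value_iteration_converges value_iteration_converges])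
    (use finite_horizon_bounds in auto)

lemma value_le_cap: "vi b x 0 \<le> value_cap"
  by (rule LIMSEQ_le_const2[OF value_iteration_converges]) (use finite_horizon_bounds in auto)

lemma value_ge_cost: "- h x / \<beta> \<le> vi b x 0"
  by (rule LIMSEQ_le_const[OF value_iteration_converges]) (use finite_horizon_bounds in auto)

definition d0 :: "(nat \<Rightarrow> nat \<Rightarrow> real) \<Rightarrow> nat \<Rightarrow> real" where
  "d0 w x = w x 0 - w (x + 1) 0"

definition d1 :: "(nat \<Rightarrow> nat \<Rightarrow> real) \<Rightarrow> nat \<Rightarrow> real" where
  "d1 w x = w x 1 - w (x + 1) 1"

definition decr_concave :: "(nat \<Rightarrow> nat \<Rightarrow> real) \<Rightarrow> bool" where
  "decr_concave w \<longleftrightarrow> (\<forall>x. 0 \<le> d0 w x \<and> d0 w x \<le> d0 w (x + 1) \<and> 0 \<le> d1 w x \<and> d1 w x \<le> d1 w (x + 1))"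

definition diff_step :: "bool \<Rightarrow> real \<Rightarrow> real \<Rightarrow> real \<Rightarrow> real \<Rightarrow> real" where
  "diff_step b hq a p d = hq + lam * a + mul * p
     + (if b then min (\<delta> * d) c + max 0 (\<delta> * p - c) else \<delta> * d)"

lemma B_diff0:
  "d0 (B b w) x = diff_step b (h (x + 1) - h x) (d1 w x) (if x = 0 then 0 else d0 w (x - 1)) (d0 w x)"
proof (cases "x = 0")
  case True
  have muh: "muh * w 0 0 = mul * w 0 0 + \<delta> * w 0 0" by (simp add: \<delta>_def algebra_simps)
  show ?thesis
  proof (cases b)
    case True
    have "d0 (B b w) 0 = h 1 + lam * d1 w 0 + (\<delta> * w 0 0 - max (\<delta> * w 1 0) (- c + \<delta> * w 0 0))"
      using True muh by (simp add: d0_def d1_def B0 algebra_simps)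
    also have "\<dots> = h 1 + lam * d1 w 0 + min (\<delta> * d0 w 0) c"
      by (simp only: switch_diff_first) (simp add: d0_def)
    finally show ?thesis using \<open>x = 0\<close> True c_pos by (simp add: diff_step_def h_zero)
  next
    case False
    then show ?thesis using \<open>x = 0\<close> muh
      by (simp add: d0_def d1_def B0 diff_step_def h_zero algebra_simps)
  qed
next
  case False
  show ?thesis
  proof (cases b)
    case True
    have "d0 (B b w) x = (h (x + 1) - h x) + lam * d1 w x + mul * d0 w (x - 1)
        + (max (\<delta> * w x 0) (- c + \<delta> * w (x - 1) 0) - max (\<delta> * w (x + 1) 0) (- c + \<delta> * w x 0))"
      using False True by (simp add: d0_def d1_def B0 algebra_simps)
    also have "\<dots> = (h (x + 1) - h x) + lam * d1 w x + mul * d0 w (x - 1)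
        + (min (\<delta> * d0 w x) c + max 0 (\<delta> * d0 w (x - 1) - c))"
      using False by (simp only: switch_diff) (simp add: d0_def)
    finally show ?thesis using False True by (simp add: diff_step_def)
  next
    case False
    then show ?thesis using \<open>x \<noteq> 0\<close>
      by (simp add: d0_def d1_def B0 diff_step_def algebra_simps)
  qed
qed

lemma diff_step_mono:
  assumes "0 \<le> hq" "hq \<le> hq'" "0 \<le> a" "a \<le> a'" "0 \<le> p" "p \<le> p'" "0 \<le> d" "d \<le> d'"
  shows "0 \<le> diff_step b hq a p d \<and> diff_step b hq a p d \<le> diff_step b hq' a' p' d'"
proof -
  have "0 \<le> lam * a" "lam * a \<le> lam * a'" using assms lam_pos by (auto intro: mult_left_mono)
  moreover have "0 \<le> mul * p" "mul * p \<le> mul * p'" using assms mul_pos by (auto intro: mult_left_mono)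
  moreover have "0 \<le> \<delta> * d" "\<delta> * d \<le> \<delta> * d'" using assms \<delta>_pos by (auto intro: mult_left_mono)
  moreover have "\<delta> * p \<le> \<delta> * p'" using assms \<delta>_pos by (auto intro: mult_left_mono)
  ultimately show ?thesis using assms c_pos by (cases b) (auto simp: diff_step_def max_def min_def)
qed

text \<open>Convexity of h makes the Bellman operator preserve decreasing concave values.\<close>

lemma B_keeps_decr_concave:
  assumes "decr_concave w" shows "decr_concave (B b w)"
proof -
  have prev: "0 \<le> (if y = 0 then 0 else d0 w (y - 1))
      \<and> (if y = 0 then 0 else d0 w (y - 1)) \<le> (if y + 1 = 0 then 0 else d0 w (y + 1 - 1))" for y
    using assms by (cases y) (auto simp: decr_concave_def)
  have hq: "0 \<le> h (y + 1) - h y" "h (y + 1) - h y \<le> h (y + 1 + 1) - h (y + 1)" for y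
    using h_mono[of y "y + 1"] h_convex[of y] by (simp_all add: numeral_2_eq_2)
  have diff0: "0 \<le> d0 (B b w) y \<and> d0 (B b w) y \<le> d0 (B b w) (y + 1)" for y
    unfolding B_diff0 using assms prev[of y] hq[of y]
    by (intro diff_step_mono) (auto simp: decr_concave_def)
  have diff1: "0 \<le> d1 (B b w) y \<and> d1 (B b w) y \<le> d1 (B b w) (y + 1)" for y
    using admission_keeps_concave[of "B b w y 0" "B b w (y + 1) 0" "B b w (y + 2) 0" "B b w (y + 3) 0" R]
      diff0[of y] diff0[of "y + 1"] diff0[of "y + 2"] R_nonneg
    by (simp add: d0_def d1_def B1[simplified] numeral_2_eq_2 numeral_3_eq_3)
  show ?thesis using diff0 diff1 by (simp add: decr_concave_def)
qed

text \<open>All finite-horizon values are decreasing and concave, hence the differences of the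
  limits are nondecreasing.\<close>

lemma limit_diff_mono: "d0 (vi b) x \<le> d0 (vi b) (x + 1)"
proof -
  have "decr_concave (V b n)" for n
  proof (induction n)
    case 0
    then show ?case by (simp add: decr_concave_def d0_def d1_def)
  next
    case (Suc n)
    then show ?case unfolding V_Suc by (rule B_keeps_decr_concave)
  qed
  note conv = value_iteration_converges[OF le0]
  show ?thesis unfolding d0_def
    by (rule LIMSEQ_le[OF tendsto_diff[OF conv conv] tendsto_diff[OF conv conv]])
      (use \<open>\<And>n. decr_concave (V b n)\<close> in \<open>auto simp: decr_concave_def d0_def\<close>)
qed

lemma fixed_point0: "vi b x 0 = (if x = 0 then lam * vi b 0 1 + muh * vi b 0 0
    else - h x + lam * vi b x 1 + mul * vi b (x - 1) 0
      + (if b then max (\<delta> * vi b x 0) (- c + \<delta> * vi b (x - 1) 0) else \<delta> * vi b x 0))"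
proof -
  have "vi b x 0 = B b (vi b) x 0" by (rule bellman) simp
  then show ?thesis unfolding B0 .
qed

lemma fixed_point1: "vi b x 1 = max (R + vi b (x + 1) 0) (vi b x 0)"
proof -
  have "vi b x 1 = B b (vi b) x 1" by (rule bellman) simp
  also have "\<dots> = max (R + B b (vi b) (x + 1) 0) (B b (vi b) x 0)" by (rule B1)
  finally show ?thesis using bellman[OF le0, of b] by simp
qed

definition gap :: "nat \<Rightarrow> nat \<Rightarrow> real" where
  "gap x i = vi True x i - vi False x i"

lemma gap_nonneg: "i \<le> 1 \<Longrightarrow> 0 \<le> gap x i"
  using combined_dominates by (simp add: gap_def)

lemma gap_le_weight: "gap x 0 \<le> weight x / \<beta>"
proof -
  have "lam * R \<le> R"
    using lam_pos R_nonneg normalization beta_pos mul_pos mul_muh by (intro mult_left_le_one_le) auto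
  then have "value_cap \<le> (R + c) / \<beta>"
    using c_pos beta_pos by (simp add: value_cap_def divide_right_mono)
  then show ?thesis using value_le_cap[of True x] value_ge_cost[of x False]
    by (simp add: gap_def weight_def add_divide_distrib)
qed

lemma gap1_le: "gap x 1 \<le> (if d0 (vi True) x \<le> R then gap (x + 1) 0 else gap x 0)"
  using fixed_point1[of True x] fixed_point1[of False x] by (auto simp: gap_def d0_def max_def)

text \<open>Where the combined problem keeps the slow rate, the gap satisfies the admission-control
  recursion.\<close>

lemma gap0_eq_zero_state: "gap 0 0 = lam * gap 0 1 + muh * gap 0 0"
  using fixed_point0[of True 0] fixed_point0[of False 0] by (simp add: gap_def algebra_simps)

lemma gap0_eq_slow:
  assumes "x \<noteq> 0" and slow: "d0 (vi True) (x - 1) \<le> c / \<delta>"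
  shows "gap x 0 = lam * gap x 1 + mul * gap (x - 1) 0 + \<delta> * gap x 0"
proof -
  have "\<delta> * (vi True (x - 1) 0 - vi True x 0) \<le> c"
    using slow \<delta>_pos \<open>x \<noteq> 0\<close> by (simp add: d0_def pos_le_divide_eq mult.commute)
  then have "max (\<delta> * vi True x 0) (- c + \<delta> * vi True (x - 1) 0) = \<delta> * vi True x 0"
    by (simp add: algebra_simps max_def)
  then show ?thesis
    using fixed_point0[of True x] fixed_point0[of False x] \<open>x \<noteq> 0\<close> by (simp add: gap_def algebra_simps)
qed

definition slow_segment :: "nat set \<Rightarrow> bool" where
  "slow_segment S \<longleftrightarrow> (\<forall>x\<in>S. \<forall>y\<le>x. y \<in> S)
     \<and> (\<forall>x\<in>S. x \<noteq> 0 \<longrightarrow> d0 (vi True) (x - 1) \<le> c / \<delta>)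
     \<and> (\<forall>x\<in>S. d0 (vi True) x \<le> R \<longrightarrow> x + 1 \<in> S)"

text \<open>On such a segment the gap contracts by the factor \<Lambda> per step, starting from the
  weight bound.\<close>

lemma gap_contraction:
  assumes S: "slow_segment S" and "x \<in> S"
  shows "gap x 0 \<le> \<Lambda> ^ k * (weight (x + k) / \<beta>)"
  using \<open>x \<in> S\<close>
proof (induction k arbitrary: x)
  case 0
  then show ?case using gap_le_weight by simp
next
  case (Suc k)
  let ?K = "\<Lambda> ^ k * (weight (x + 1 + k) / \<beta>)"
  have bound: "gap y 0 \<le> ?K" if "y \<in> S" "y \<le> x + 1" for y
  proof -
    have "\<Lambda> ^ k * (weight (y + k) / \<beta>) \<le> ?K"
      using \<Lambda>_pos beta_pos that weight_mono[of "y + k" "x + 1 + k"]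
      by (intro mult_left_mono divide_right_mono) auto
    then show ?thesis using Suc.IH[OF that(1)] by linarith
  qed
  have at_x: "gap x 0 \<le> ?K" using bound Suc.prems by simp
  have arrival: "gap x 1 \<le> ?K"
    using gap1_le[of x] S Suc.prems at_x bound[of "x + 1"] by (auto simp: slow_segment_def split: if_splits)
  have "gap x 0 \<le> \<Lambda> * ?K"
  proof (cases "x = 0")
    case True
    have "lam * gap x 1 + muh * gap x 0 \<le> lam * ?K + muh * ?K"
      using arrival at_x lam_pos mul_pos mul_muh by (intro add_mono mult_left_mono) auto
    moreover have "lam * ?K + muh * ?K = \<Lambda> * ?K" by (simp only: \<Lambda>_def distrib_right)
    moreover have "gap x 0 = lam * gap x 1 + muh * gap x 0" using True gap0_eq_zero_state by simp
    ultimately show ?thesis by linarith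
  next
    case False
    have prev: "gap (x - 1) 0 \<le> ?K" using bound S Suc.prems by (simp add: slow_segment_def)
    have "lam * gap x 1 + mul * gap (x - 1) 0 + \<delta> * gap x 0 \<le> lam * ?K + mul * ?K + \<delta> * ?K"
      using arrival prev at_x lam_pos mul_pos \<delta>_pos by (intro add_mono mult_left_mono) auto
    moreover have "gap x 0 = lam * gap x 1 + mul * gap (x - 1) 0 + \<delta> * gap x 0"
      using gap0_eq_slow False S Suc.prems by (simp add: slow_segment_def)
    moreover have "lam * ?K + mul * ?K + \<delta> * ?K = \<Lambda> * ?K"
      by (simp only: rates_sum[symmetric] distrib_right)
    ultimately show ?thesis by linarith
  qed
  then show ?case by (simp add: ac_simps)
qed

lemma gap_vanishes:
  assumes S: "slow_segment S" and "x \<in> S" and "i \<le> 1"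
  shows "gap x i = 0"
proof -
  have zero0: "gap y 0 = 0" if "y \<in> S" for y
  proof -
    have "(\<lambda>k. \<Lambda> ^ k * weight (y + k)) \<longlonglongrightarrow> 0"
      by (rule summable_LIMSEQ_zero[OF discounted_weight_summable])
    then have "(\<lambda>k. \<Lambda> ^ k * (weight (y + k) / \<beta>)) \<longlonglongrightarrow> 0"
      using tendsto_divide_zero by fastforce
    then have "gap y 0 \<le> 0"
      by (rule LIMSEQ_le_const) (use gap_contraction[OF S that] in auto)
    then show ?thesis using gap_nonneg[of 0 y] by simp
  qed
  have "gap x 1 = 0"
    using gap1_le[of x] gap_nonneg[of 1 x] S \<open>x \<in> S\<close> zero0 by (auto simp: slow_segment_def split: if_splits)
  then show ?thesis using zero0[OF \<open>x \<in> S\<close>] \<open>i \<le> 1\<close> by (cases i) auto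
qed

text \<open>The states x <= B^s: up to one state beyond the last one where the combined problem
  still prefers the slow rate.\<close>

definition slow_region :: "nat set" where
  "slow_region = {x. ereal (real x) \<le> 1 + Tsup (d0 (vi True)) (c / \<delta>)}"

lemma zero_in_slow_region: "0 \<in> slow_region"
  using zero_le_one_plus[OF Tsup_ge_minus_one] by (simp add: slow_region_def)

text \<open>Since the differences of v are nondecreasing, the fast rate is never used below B^s; and
  if R <= c/delta then every admission decision inside it leads back into it.\<close>

lemma slow_region_segment:
  assumes R_le: "R \<le> c / \<delta>" shows "slow_segment slow_region"
proof -
  let ?T = "Tsup (d0 (vi True)) (c / \<delta>)"
  have T: "-1 \<le> ?T" by (rule Tsup_ge_minus_one)
  have mono: "d0 (vi True) j \<le> d0 (vi True) (Suc j)" for j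
    using limit_diff_mono by simp
  have "d0 (vi True) (x - 1) \<le> c / \<delta>" if "x \<in> slow_region" "x \<noteq> 0" for x
    using that pred_le_of_le_one_plus[OF T] Tsup_below[of "d0 (vi True)", OF mono]
    by (simp add: slow_region_def)
  moreover have "x + 1 \<in> slow_region" if "d0 (vi True) x \<le> R" for x
    using that R_le Tsup_upper[of "d0 (vi True)" x "c / \<delta>"] succ_le_one_plus
    by (simp add: slow_region_def)
  ultimately show ?thesis
    by (auto simp: slow_segment_def slow_region_def intro: ereal_of_nat_le_mono)
qed

lemma d0_le_on_segment:
  assumes "slow_segment S" "x \<in> S"
  shows "d0 (vi True) x \<le> d0 (vi False) x"
  using gap_vanishes[OF assms le0] gap_nonneg[of 0 "x + 1"] by (simp add: d0_def gap_def)

lemma admission_test_agrees: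
  assumes R_le: "R \<le> c / \<delta>"
  shows "d0 (vi False) k \<le> R \<longleftrightarrow> d0 (vi True) k \<le> R"
proof
  have S: "slow_segment slow_region" using slow_region_segment[OF R_le] .
  assume admission: "d0 (vi False) k \<le> R"
  have mono: "d0 (vi False) j \<le> d0 (vi False) k" if "j \<le> k" for j
    using lift_Suc_mono_le[of "d0 (vi False)", OF _ that] limit_diff_mono by simp
  have "j \<in> slow_region" if "j \<le> k" for j
    using that
  proof (induction j)
    case 0
    show ?case using zero_in_slow_region by simp
  next
    case (Suc j)
    then have "j \<in> slow_region" by simp
    moreover have "d0 (vi True) j \<le> R"
      using d0_le_on_segment[OF S \<open>j \<in> slow_region\<close>] mono[of j] Suc.prems admission by simp
    ultimately show ?case using S by (simp add: slow_segment_def)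
  qed
  then have "d0 (vi True) k \<le> d0 (vi False) k"
    using d0_le_on_segment[OF S] by simp
  then show "d0 (vi True) k \<le> R" using admission by simp
next
  have S: "slow_segment slow_region" using slow_region_segment[OF R_le] .
  assume combined: "d0 (vi True) k \<le> R"
  have "k + 1 \<in> slow_region"
    using combined R_le Tsup_upper[of "d0 (vi True)" k "c / \<delta>"] succ_le_one_plus
    by (simp add: slow_region_def)
  moreover from this have "k \<in> slow_region"
    by (simp add: slow_region_def ereal_of_nat_le_mono[of "k + 1" _ k])
  ultimately have "gap k 0 = 0" "gap (k + 1) 0 = 0" using gap_vanishes[OF S _ le0] by auto
  then show "d0 (vi False) k \<le> R" using combined by (simp add: d0_def gap_def)
qed

end

theorem theorem4:
  fixes lam mul muh R c \<beta> :: real and h :: "nat \<Rightarrow> real"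
  assumes lam_pos: "lam > 0"
    and mul_pos: "0 < mul" and mul_muh: "mul < muh"
    and R_nonneg: "R \<ge> 0" and c_pos: "c > 0"
    and beta_pos: "\<beta> > 0" and normalization: "lam + muh + \<beta> = 1"
    and h_mono: "\<And>x y. x \<le> y \<Longrightarrow> h x \<le> h y"
    and h_convex: "\<And>x. h (x + 1) - h x \<le> h (x + 2) - h (x + 1)"
    and h_zero: "h 0 = 0"
    and A1_1: "\<exists>\<theta>>1. \<forall>x>0. h (x + 1) \<le> \<theta> * h x"
    and A1_2: "\<exists>\<gamma> J. 0 \<le> \<gamma> \<and> \<gamma> < 1 \<and> J > 0 \<and>
                 (\<forall>x. ((lam + muh) / (lam + muh + \<beta>)) ^ J * (R + c + h (x + J))
                        \<le> \<gamma> * (R + c + h x))"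
    and R_le: "R \<le> c / (muh - mul)"
  shows
    "(let v = vinf True lam mul muh R c h;
          vh = vinf False lam mul muh R c h;
          \<Delta> = (\<lambda>x. v x 0 - v (x + 1) 0);
          \<Delta>h = (\<lambda>x. vh x 0 - vh (x + 1) 0);
          Bs = 1 + Tsup \<Delta> (c / (muh - mul));
          Bd = Tsup \<Delta> R;
          Bdh = Tsup \<Delta>h R
      in Bdh = Bd \<and>
         (\<forall>x i. i \<le> 1 \<longrightarrow> ereal (real x) \<le> Bs \<longrightarrow> v x i - vh x i = 0))"
proof -
  interpret queue_model lam mul muh R c \<beta> h
    using lam_pos mul_pos mul_muh R_nonneg c_pos beta_pos normalization h_mono h_convex h_zero A1_2
    by unfold_locales
  have R_le': "R \<le> c / \<delta>" using R_le by (simp add: \<delta>_def)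
  have thresholds: "Tsup (\<lambda>x. vi False x 0 - vi False (x + 1) 0) R
      = Tsup (\<lambda>x. vi True x 0 - vi True (x + 1) 0) R"
    by (rule Tsup_cong) (rule admission_test_agrees[OF R_le', unfolded d0_def])
  have no_gap: "vi True x i - vi False x i = 0"
    if "i \<le> 1" "ereal (real x) \<le> 1 + Tsup (\<lambda>x. vi True x 0 - vi True (x + 1) 0) (c / (muh - mul))"
    for x i
    using gap_vanishes[OF slow_region_segment[OF R_le'] _ that(1), of x] that(2)
    unfolding slow_region_def gap_def d0_def[abs_def] \<delta>_def by simp
  show ?thesis unfolding Let_def using thresholds no_gap by blast
qed

end
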